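(* Let $(\Omega,+)$ be a group and $a,b$ central subgroups. Then $\mathit{Gras}_{ab}:=\mathit{Gras}(\Omega)\cap U_{ab}$ is a subtorsor of $U_{ab}$, and (for a base point $y\in\mathit{Gras}_{ab}$) the group $(\mathit{Gras}_{ab},y)$ acts from the left, by $(x,z)\mapsto\Gamma(x,a,y,b,z)$ and $(x,(z,\zeta))\mapsto(\Gamma(x,a,y,b,z),L_{xayb}(\zeta))$, and from the right, by $(z,x)\mapsto\Gamma(z,a,y,b,x)$ and $((z,\zeta),x)\mapsto(\Gamma(z,a,y,b,x),R_{aybx}(\zeta))$, on the Grassmannian $\mathit{Gras}(\Omega)$ and on the Grassmann tautological bundle $\widehat{\mathit{Gras}}(\Omega)=\{(z,\zeta): z\in\mathit{Gras}(\Omega),\ \zeta\in z\}$.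
   Context: $(\Omega,+)$ is a group written additively but not necessarily abelian; $\mathit{Gras}(\Omega)$ is its set of subgroups. For subsets $u,v$, $u\top v$ means every $\omega$ has a unique decomposition $\omega=\mu+\nu$ with $\mu\in u,\nu\in v$; then $P^u_v(\omega):=\nu$ and $\check P^v_u(\omega):=\mu$. $\Gamma(x,a,y,b,z)=\{\omega:\exists\alpha\in a,\beta\in b:\ \alpha+\omega+\beta\in y,\ \alpha+\omega\in z,\ \omega+\beta\in x\}$. $U_{ab}=\{x\subseteq\Omega: a\top x,\ x\top b\}$ with torsor law $\Gamma(\cdot,a,\cdot,b,\cdot)$; with base point $y$ it is a group with product $xz=\Gamma(x,a,y,b,z)$. $L_{xayb}:=-\check P^x_a\circ\check P^b_y+\mathrm{id}$, $R_{aybx}:=\mathrm{id}-P^x_b\circ P^{-a}_y$ (pointwise operations of maps $\Omega\to\Omega$). *)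

theory Defs
  imports Main
begin

text \<open>Omega is modelled as a type of class group_add (additive, not necessarily abelian).\<close>

definition is_subgrp :: "'a::group_add set \<Rightarrow> bool" where
  "is_subgrp x \<longleftrightarrow> 0 \<in> x \<and> (\<forall>u\<in>x. \<forall>v\<in>x. u + v \<in> x) \<and> (\<forall>u\<in>x. - u \<in> x)"

definition Gras :: "'a::group_add set set" where
  "Gras = {x. is_subgrp x}"

definition is_central :: "'a::group_add set \<Rightarrow> bool" where
  "is_central a \<longleftrightarrow> (\<forall>\<alpha>\<in>a. \<forall>\<omega>. \<alpha> + \<omega> = \<omega> + \<alpha>)"

definition transv :: "'a::group_add set \<Rightarrow> 'a set \<Rightarrow> bool" where
  "transv u v \<longleftrightarrow> (\<forall>\<omega>. \<exists>!p. p \<in> u \<times> v \<and> \<omega> = fst p + snd p)"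

definition Pproj :: "'a::group_add set \<Rightarrow> 'a set \<Rightarrow> 'a \<Rightarrow> 'a" where
  "Pproj u v \<omega> = snd (THE p. p \<in> u \<times> v \<and> \<omega> = fst p + snd p)"

definition Pcheck :: "'a::group_add set \<Rightarrow> 'a set \<Rightarrow> 'a \<Rightarrow> 'a" where
  "Pcheck v u \<omega> = fst (THE p. p \<in> u \<times> v \<and> \<omega> = fst p + snd p)"

definition Gamma :: "'a::group_add set \<Rightarrow> 'a set \<Rightarrow> 'a set \<Rightarrow> 'a set \<Rightarrow> 'a set \<Rightarrow> 'a set" where
  "Gamma x a y b z = {\<omega>. \<exists>\<alpha>\<in>a. \<exists>\<beta>\<in>b. \<alpha> + \<omega> + \<beta> \<in> y \<and> \<alpha> + \<omega> \<in> z \<and> \<omega> + \<beta> \<in> x}"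

definition U :: "'a::group_add set \<Rightarrow> 'a set \<Rightarrow> 'a set set" where
  "U a b = {x. transv a x \<and> transv x b}"

definition Gras_ab :: "'a::group_add set \<Rightarrow> 'a set \<Rightarrow> 'a set set" where
  "Gras_ab a b = Gras \<inter> U a b"

definition Gras_hat :: "('a::group_add set \<times> 'a) set" where
  "Gras_hat = {(z, \<zeta>). z \<in> Gras \<and> \<zeta> \<in> z}"

definition Lmap :: "'a::group_add set \<Rightarrow> 'a set \<Rightarrow> 'a set \<Rightarrow> 'a set \<Rightarrow> 'a \<Rightarrow> 'a" where
  "Lmap x a y b \<zeta> = - Pcheck x a (Pcheck b y \<zeta>) + \<zeta>"

definition Rmap :: "'a::group_add set \<Rightarrow> 'a set \<Rightarrow> 'a set \<Rightarrow> 'a set \<Rightarrow> 'a \<Rightarrow> 'a" where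
  "Rmap a y b x \<zeta> = \<zeta> - Pproj x b (Pproj (uminus ` a) y \<zeta>)"

definition is_subtorsor :: "'x set \<Rightarrow> 'x set \<Rightarrow> ('x \<Rightarrow> 'x \<Rightarrow> 'x \<Rightarrow> 'x) \<Rightarrow> bool" where
  "is_subtorsor S T law \<longleftrightarrow> S \<subseteq> T \<and> (\<forall>x\<in>S. \<forall>u\<in>S. \<forall>z\<in>S. law x u z \<in> S)"

definition is_left_action :: "'g set \<Rightarrow> ('g \<Rightarrow> 'g \<Rightarrow> 'g) \<Rightarrow> 'g \<Rightarrow> ('g \<Rightarrow> 'x \<Rightarrow> 'x) \<Rightarrow> 'x set \<Rightarrow> bool" where
  "is_left_action G m e act X \<longleftrightarrow>
     (\<forall>g\<in>G. \<forall>p\<in>X. act g p \<in> X) \<and> (\<forall>p\<in>X. act e p = p) \<and>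
     (\<forall>g\<in>G. \<forall>h\<in>G. \<forall>p\<in>X. act g (act h p) = act (m g h) p)"

definition is_right_action :: "'g set \<Rightarrow> ('g \<Rightarrow> 'g \<Rightarrow> 'g) \<Rightarrow> 'g \<Rightarrow> ('x \<Rightarrow> 'g \<Rightarrow> 'x) \<Rightarrow> 'x set \<Rightarrow> bool" where
  "is_right_action G m e act X \<longleftrightarrow>
     (\<forall>g\<in>G. \<forall>p\<in>X. act p g \<in> X) \<and> (\<forall>p\<in>X. act p e = p) \<and>
     (\<forall>g\<in>G. \<forall>h\<in>G. \<forall>p\<in>X. act (act p g) h = act p (m g h))"

end

(*
  For x, y \<in> Gras_ab, the map L_{yaxb} sends \<omega> to \<alpha> + \<omega>, where \<alpha> \<in> a is the unique element
  for which some \<beta> \<in> b has \<omega> + \<beta> \<in> x and \<alpha> + \<omega> + \<beta> \<in> y. Centrality of a and b makes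
  it additive, it fixes b pointwise, maps a onto a, and L_{xayb} is its inverse. Comparing with
  the definition of \<Gamma>, one reads off \<Gamma>(x,a,y,b,z) = L_{xayb}(z). Hence \<Gamma>(x,a,y,b,\<cdot>) preserves
  subgroups and transversality to a and b (the subtorsor property), and the same witnesses give
  L_{\<Gamma>(g,a,y,b,h) a y b} = L_{gayb} \<circ> L_{hayb}, which is the left action on Gras and on Gras_hat.
  By centrality again, \<Gamma>(z,a,y,b,x) = \<Gamma>(x,b,y,a,z) and R_{aybx} = L_{xbya}: the right actions
  are the left actions for the pair (b, a).
*)

theory Submission imports Defs begin

lemma is_subgrp_zero: "is_subgrp x \<Longrightarrow> 0 \<in> x"
  and is_subgrp_add: "is_subgrp x \<Longrightarrow> u \<in> x \<Longrightarrow> v \<in> x \<Longrightarrow> u + v \<in> x"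
  and is_subgrp_uminus: "is_subgrp x \<Longrightarrow> u \<in> x \<Longrightarrow> - u \<in> x"
  by (simp_all add: is_subgrp_def)

lemma is_subgrp_uminus_image: "is_subgrp a \<Longrightarrow> uminus ` a = a"
  unfolding is_subgrp_def by (auto simp: image_iff) (metis minus_minus)

lemma central_commute: "is_central c \<Longrightarrow> g \<in> c \<Longrightarrow> g + w = w + g"
  unfolding is_central_def by blast

lemma transv_decomp: "transv u v \<Longrightarrow> \<exists>m\<in>u. \<exists>n\<in>v. w = m + n"
  unfolding transv_def by (metis mem_Sigma_iff prod.collapse)

lemma transv_unique:
  assumes "transv u v" "m \<in> u" "n \<in> v" "m' \<in> u" "n' \<in> v" "m + n = m' + n'"
  shows "m = m' \<and> n = n'"
proof -
  from assms(1) have "\<exists>!p. p \<in> u \<times> v \<and> m + n = fst p + snd p"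
    unfolding transv_def by blast
  then show ?thesis using assms by (metis fst_conv snd_conv mem_Sigma_iff)
qed

lemma transvI:
  assumes "\<And>w. \<exists>m\<in>u. \<exists>n\<in>v. w = m + n"
    and "\<And>m n m' n'. m \<in> u \<Longrightarrow> n \<in> v \<Longrightarrow> m' \<in> u \<Longrightarrow> n' \<in> v \<Longrightarrow> m + n = m' + n'
      \<Longrightarrow> m = m' \<and> n = n'"
  shows "transv u v"
  unfolding transv_def
proof
  fix w
  obtain m n where mn: "m \<in> u" "n \<in> v" "w = m + n" using assms(1) by blast
  show "\<exists>!p. p \<in> u \<times> v \<and> w = fst p + snd p"
  proof (rule ex1I[of _ "(m, n)"])
    fix p assume "p \<in> u \<times> v \<and> w = fst p + snd p"
    then show "p = (m, n)" using assms(2)[of m n "fst p" "snd p"] mn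
      by (metis mem_Sigma_iff prod.collapse)
  qed (use mn in simp)
qed

lemma transv_the_decomp:
  assumes "transv u v" "m \<in> u" "n \<in> v"
  shows "(THE p. p \<in> u \<times> v \<and> m + n = fst p + snd p) = (m, n)"
proof (rule the_equality)
  fix p assume "p \<in> u \<times> v \<and> m + n = fst p + snd p"
  then show "p = (m, n)" using transv_unique[OF assms(1,2,3), of "fst p" "snd p"]
    by (metis mem_Sigma_iff prod.collapse)
qed (use assms in simp)

lemma Pcheck_eq: "transv u v \<Longrightarrow> m \<in> u \<Longrightarrow> n \<in> v \<Longrightarrow> Pcheck v u (m + n) = m"
  and Pproj_eq: "transv u v \<Longrightarrow> m \<in> u \<Longrightarrow> n \<in> v \<Longrightarrow> Pproj u v (m + n) = n"
  by (simp_all add: Pcheck_def Pproj_def transv_the_decomp)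

lemma
  assumes "transv u v"
  shows Pcheck_mem: "Pcheck v u w \<in> u"
    and Pproj_mem: "Pproj u v w \<in> v"
    and Pcheck_add_Pproj: "Pcheck v u w + Pproj u v w = w"
  using transv_decomp[OF assms, of w] Pcheck_eq[OF assms] Pproj_eq[OF assms] by auto

lemma transv_swap_commuting:
  assumes "\<And>m n. m \<in> u \<Longrightarrow> n \<in> v \<Longrightarrow> m + n = n + m" and "transv u v"
  shows "transv v u"
proof (rule transvI)
  fix w
  obtain m n where "m \<in> u" "n \<in> v" "w = m + n" using transv_decomp[OF assms(2)] by blast
  then show "\<exists>n\<in>v. \<exists>m\<in>u. w = n + m" using assms(1) by metis
next
  fix n m n' m' assume "n \<in> v" "m \<in> u" "n' \<in> v" "m' \<in> u" "n + m = n' + m'"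
  then show "n = n' \<and> m = m'" using transv_unique[OF assms(2), of m n m' n'] assms(1) by metis
qed

lemma transv_central_commute: "is_central c \<Longrightarrow> transv c x \<longleftrightarrow> transv x c"
  using transv_swap_commuting[of c x] transv_swap_commuting[of x c] central_commute
  by (metis (no_types))

lemma
  assumes "is_central c" "transv c x"
  shows Pproj_central_left: "Pproj c x w = Pcheck c x w"
    and Pproj_central_right: "Pproj x c w = Pcheck x c w"
proof -
  have xc: "transv x c" using transv_central_commute[OF assms(1)] assms(2) by simp
  obtain g k where gk: "g \<in> c" "k \<in> x" "w = g + k" using transv_decomp[OF assms(2)] by blast
  moreover have "w = k + g" using gk central_commute[OF assms(1)] by simp
  ultimately show "Pproj c x w = Pcheck c x w" "Pproj x c w = Pcheck x c w"
    using Pproj_eq[OF assms(2) gk(1,2)] Pcheck_eq[OF xc gk(2,1)]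
      Pproj_eq[OF xc gk(2,1)] Pcheck_eq[OF assms(2) gk(1,2)] by simp_all
qed

lemma additive_zero:
  fixes f :: "'a::group_add \<Rightarrow> 'b::group_add"
  assumes "\<And>u v. f (u + v) = f u + f v"
  shows "f 0 = 0"
proof -
  have "f 0 + f 0 = f 0 + 0" using assms[of 0 0] by simp
  then show ?thesis by (rule add_left_imp_eq)
qed

lemma additive_uminus:
  fixes f :: "'a::group_add \<Rightarrow> 'b::group_add"
  assumes "\<And>u v. f (u + v) = f u + f v"
  shows "f (- u) = - f u"
proof -
  have "f (- u) + f u = 0" using assms[of "- u" u] additive_zero[of f, OF assms] by simp
  then show ?thesis by (simp add: eq_neg_iff_add_eq_0)
qed

lemma is_subgrp_additive_image:
  fixes f :: "'a::group_add \<Rightarrow> 'b::group_add"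
  assumes "\<And>u v. f (u + v) = f u + f v" "is_subgrp z"
  shows "is_subgrp (f ` z)"
  unfolding is_subgrp_def
proof (intro conjI ballI)
  show "0 \<in> f ` z" using additive_zero[of f, OF assms(1)] is_subgrp_zero[OF assms(2)] by force
next
  fix u v assume "u \<in> f ` z" "v \<in> f ` z"
  then show "u + v \<in> f ` z" using is_subgrp_add[OF assms(2)] by (auto simp flip: assms(1))
next
  fix u assume "u \<in> f ` z"
  then show "- u \<in> f ` z"
    using is_subgrp_uminus[OF assms(2)] by (auto simp flip: additive_uminus[of f, OF assms(1)])
qed

lemma transv_additive_image:
  assumes "\<And>u v. f (u + v) = f u + f v" "bij f" "transv u v"
  shows "transv (f ` u) (f ` v)"
proof (rule transvI)
  fix w
  obtain w' where "w = f w'" using bij_is_surj[OF assms(2)] by blast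
  moreover obtain m n where "m \<in> u" "n \<in> v" "w' = m + n" using transv_decomp[OF assms(3)] by blast
  ultimately show "\<exists>m\<in>f ` u. \<exists>n\<in>f ` v. w = m + n" using assms(1) by blast
next
  fix m n m' n' assume "m \<in> f ` u" "n \<in> f ` v" "m' \<in> f ` u" "n' \<in> f ` v" "m + n = m' + n'"
  then obtain p q p' q' where pq: "p \<in> u" "q \<in> v" "p' \<in> u" "q' \<in> v"
    and eq: "m = f p" "n = f q" "m' = f p'" "n' = f q'" "f (p + q) = f (p' + q')"
    by (auto simp: assms(1))
  have "p + q = p' + q'" using eq(5) bij_is_inj[OF assms(2)] by (simp add: inj_eq)
  then show "m = m' \<and> n = n'" using transv_unique[OF assms(3) pq] eq by simp
qed

lemma Gras_ab_commute: "is_central a \<Longrightarrow> is_central b \<Longrightarrow> Gras_ab a b = Gras_ab b a"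
  unfolding Gras_ab_def U_def using transv_central_commute by blast

lemma Gamma_commute:
  assumes "is_central a" "is_central b"
  shows "Gamma z a y b x = Gamma x b y a z"
proof -
  have commute: "\<alpha> + w + \<beta> = \<beta> + w + \<alpha>" "\<alpha> + w = w + \<alpha>" "w + \<beta> = \<beta> + w"
    if "\<alpha> \<in> a" "\<beta> \<in> b" for \<alpha> \<beta> w
  proof -
    show \<alpha>: "\<alpha> + w = w + \<alpha>" using central_commute[OF assms(1) that(1)] .
    show "w + \<beta> = \<beta> + w" using central_commute[OF assms(2) that(2)] by simp
    have "\<alpha> + w + \<beta> = \<beta> + (w + \<alpha>)" using central_commute[OF assms(2) that(2)] \<alpha> by simp
    then show "\<alpha> + w + \<beta> = \<beta> + w + \<alpha>" by (simp add: add.assoc)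
  qed
  show ?thesis unfolding Gamma_def
  proof (intro Collect_cong iffI)
    fix w assume "\<exists>\<alpha>\<in>a. \<exists>\<beta>\<in>b. \<alpha> + w + \<beta> \<in> y \<and> \<alpha> + w \<in> x \<and> w + \<beta> \<in> z"
    then obtain \<alpha> \<beta> where "\<alpha> \<in> a" "\<beta> \<in> b" "\<alpha> + w + \<beta> \<in> y" "\<alpha> + w \<in> x" "w + \<beta> \<in> z"
      by blast
    then show "\<exists>\<beta>\<in>b. \<exists>\<alpha>\<in>a. \<beta> + w + \<alpha> \<in> y \<and> \<beta> + w \<in> z \<and> w + \<alpha> \<in> x"
      using commute[of \<alpha> \<beta> w] by metis
  next
    fix w assume "\<exists>\<beta>\<in>b. \<exists>\<alpha>\<in>a. \<beta> + w + \<alpha> \<in> y \<and> \<beta> + w \<in> z \<and> w + \<alpha> \<in> x"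
    then obtain \<alpha> \<beta> where "\<alpha> \<in> a" "\<beta> \<in> b" "\<beta> + w + \<alpha> \<in> y" "\<beta> + w \<in> z" "w + \<alpha> \<in> x"
      by blast
    then show "\<exists>\<alpha>\<in>a. \<exists>\<beta>\<in>b. \<alpha> + w + \<beta> \<in> y \<and> \<alpha> + w \<in> x \<and> w + \<beta> \<in> z"
      using commute[of \<alpha> \<beta> w] by metis
  qed
qed

lemma Rmap_eq_Lmap:
  assumes "is_subgrp a" "is_central a" "is_subgrp b" "is_central b" "transv a y" "transv x b"
  shows "Rmap a y b x \<zeta> = Lmap x b y a \<zeta>"
proof -
  have bx: "transv b x" using transv_central_commute[OF assms(4)] assms(6) by simp
  define k where "k = Pcheck x b (Pcheck a y \<zeta>)"
  have "- k \<in> b" unfolding k_def by (rule is_subgrp_uminus[OF assms(3) Pcheck_mem[OF bx]])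
  then have "\<zeta> - k = - k + \<zeta>"
    unfolding diff_conv_add_uminus by (rule central_commute[OF assms(4), symmetric])
  then show ?thesis
    unfolding Rmap_def Lmap_def is_subgrp_uminus_image[OF assms(1)]
      Pproj_central_left[OF assms(2,5)] Pproj_central_right[OF assms(4) bx] k_def .
qed

lemma is_right_action_of_left:
  assumes "is_left_action G m e act X" "e \<in> G"
    and "\<And>g h. g \<in> G \<Longrightarrow> h \<in> G \<Longrightarrow> m h g \<in> G"
    and "\<And>g h. g \<in> G \<Longrightarrow> h \<in> G \<Longrightarrow> m' g h = m h g"
    and "\<And>g p. g \<in> G \<Longrightarrow> p \<in> X \<Longrightarrow> ract p g = act g p"
  shows "is_right_action G m' e ract X"
  using assms unfolding is_left_action_def is_right_action_def by simp

locale central_subgroups =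
  fixes a b :: "'a::group_add set"
  assumes subgrp_a: "is_subgrp a" and central_a: "is_central a"
    and subgrp_b: "is_subgrp b" and central_b: "is_central b"
begin

lemma Gras_abD:
  assumes "x \<in> Gras_ab a b"
  shows "is_subgrp x" "transv a x" "transv x b"
  using assms by (auto simp: Gras_ab_def Gras_def U_def)

lemma Lmap_eqI:
  assumes "x \<in> Gras_ab a b" "y \<in> Gras_ab a b" "g \<in> a" "h \<in> b" "w + h \<in> x" "g + w + h \<in> y"
  shows "Lmap y a x b w = g + w"
proof -
  have "Pcheck b x (w + h + - h) = w + h"
    using Pcheck_eq[OF Gras_abD(3)[OF assms(1)] assms(5)] is_subgrp_uminus[OF subgrp_b assms(4)] .
  moreover have "Pcheck y a (- g + (g + w + h)) = - g"
    using Pcheck_eq[OF Gras_abD(2)[OF assms(2)] _ assms(6)] is_subgrp_uminus[OF subgrp_a assms(3)] .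
  ultimately show ?thesis unfolding Lmap_def by (simp add: add.assoc)
qed

lemma Lmap_decomp:
  assumes "x \<in> Gras_ab a b" "y \<in> Gras_ab a b"
  obtains g h where "g \<in> a" "h \<in> b" "w + h \<in> x" "g + w + h \<in> y" "Lmap y a x b w = g + w"
proof -
  have xb: "transv x b" and ay: "transv a y" using Gras_abD assms by blast+
  define q where "q = Pcheck b x w"
  define h where "h = - Pproj x b w"
  define g where "g = - Pcheck y a q"
  have "w + h = q"
    using Pcheck_add_Pproj[OF xb, of w] unfolding q_def h_def
    by (metis add_diff_cancel diff_conv_add_uminus)
  moreover have "g + q = Pproj a y q"
    using Pcheck_add_Pproj[OF ay, of q] unfolding g_def by (metis minus_add_cancel)
  ultimately have "w + h \<in> x" "g + w + h \<in> y"
    using Pcheck_mem[OF xb] Pproj_mem[OF ay] unfolding q_def by (simp_all add: add.assoc)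
  moreover have "g \<in> a" "h \<in> b"
    unfolding g_def h_def
    using is_subgrp_uminus[OF subgrp_a Pcheck_mem[OF ay]] is_subgrp_uminus[OF subgrp_b Pproj_mem[OF xb]]
    by blast+
  moreover have "Lmap y a x b w = g + w" unfolding Lmap_def g_def q_def ..
  ultimately show thesis using that by blast
qed

lemma Lmap_add:
  assumes "x \<in> Gras_ab a b" "y \<in> Gras_ab a b"
  shows "Lmap y a x b (w\<^sub>1 + w\<^sub>2) = Lmap y a x b w\<^sub>1 + Lmap y a x b w\<^sub>2"
proof -
  obtain g\<^sub>1 h\<^sub>1 where 1: "g\<^sub>1 \<in> a" "h\<^sub>1 \<in> b" "w\<^sub>1 + h\<^sub>1 \<in> x" "g\<^sub>1 + w\<^sub>1 + h\<^sub>1 \<in> y"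
    "Lmap y a x b w\<^sub>1 = g\<^sub>1 + w\<^sub>1"
    using Lmap_decomp[OF assms] by blast
  obtain g\<^sub>2 h\<^sub>2 where 2: "g\<^sub>2 \<in> a" "h\<^sub>2 \<in> b" "w\<^sub>2 + h\<^sub>2 \<in> x" "g\<^sub>2 + w\<^sub>2 + h\<^sub>2 \<in> y"
    "Lmap y a x b w\<^sub>2 = g\<^sub>2 + w\<^sub>2"
    using Lmap_decomp[OF assms] by blast
  have g: "g\<^sub>2 + w\<^sub>1 = w\<^sub>1 + g\<^sub>2" using central_commute[OF central_a 2(1)] .
  have h: "g\<^sub>2 + w\<^sub>2 + h\<^sub>1 = h\<^sub>1 + (g\<^sub>2 + w\<^sub>2)" "w\<^sub>2 + h\<^sub>1 = h\<^sub>1 + w\<^sub>2"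
    using central_commute[OF central_b 1(2), of "g\<^sub>2 + w\<^sub>2"] central_commute[OF central_b 1(2), of w\<^sub>2]
    by simp_all
  have "w\<^sub>1 + w\<^sub>2 + (h\<^sub>1 + h\<^sub>2) = w\<^sub>1 + (w\<^sub>2 + h\<^sub>1) + h\<^sub>2" by (simp add: add.assoc)
  also have "\<dots> = w\<^sub>1 + (h\<^sub>1 + w\<^sub>2) + h\<^sub>2" by (simp only: h(2))
  also have "\<dots> = (w\<^sub>1 + h\<^sub>1) + (w\<^sub>2 + h\<^sub>2)" by (simp add: add.assoc)
  finally have x: "w\<^sub>1 + w\<^sub>2 + (h\<^sub>1 + h\<^sub>2) \<in> x"
    using is_subgrp_add[OF Gras_abD(1)[OF assms(1)] 1(3) 2(3)] by simp
  have "g\<^sub>1 + g\<^sub>2 + (w\<^sub>1 + w\<^sub>2) + (h\<^sub>1 + h\<^sub>2) = g\<^sub>1 + (g\<^sub>2 + w\<^sub>1) + w\<^sub>2 + h\<^sub>1 + h\<^sub>2"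
    by (simp add: add.assoc)
  also have "\<dots> = g\<^sub>1 + w\<^sub>1 + (g\<^sub>2 + w\<^sub>2 + h\<^sub>1) + h\<^sub>2" by (simp add: g add.assoc)
  also have "\<dots> = g\<^sub>1 + w\<^sub>1 + (h\<^sub>1 + (g\<^sub>2 + w\<^sub>2)) + h\<^sub>2" by (simp only: h(1))
  also have "\<dots> = (g\<^sub>1 + w\<^sub>1 + h\<^sub>1) + (g\<^sub>2 + w\<^sub>2 + h\<^sub>2)" by (simp add: add.assoc)
  finally have y: "g\<^sub>1 + g\<^sub>2 + (w\<^sub>1 + w\<^sub>2) + (h\<^sub>1 + h\<^sub>2) \<in> y"
    using is_subgrp_add[OF Gras_abD(1)[OF assms(2)] 1(4) 2(4)] by simp
  have "Lmap y a x b (w\<^sub>1 + w\<^sub>2) = g\<^sub>1 + g\<^sub>2 + (w\<^sub>1 + w\<^sub>2)"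
    using Lmap_eqI[OF assms is_subgrp_add[OF subgrp_a 1(1) 2(1)] is_subgrp_add[OF subgrp_b 1(2) 2(2)] x y]
    .
  also have "\<dots> = g\<^sub>1 + (g\<^sub>2 + w\<^sub>1) + w\<^sub>2" by (simp add: add.assoc)
  also have "\<dots> = (g\<^sub>1 + w\<^sub>1) + (g\<^sub>2 + w\<^sub>2)" by (simp add: g add.assoc)
  finally show ?thesis using 1(5) 2(5) by simp
qed

lemma Lmap_inverse:
  assumes "x \<in> Gras_ab a b" "y \<in> Gras_ab a b"
  shows "Lmap x a y b (Lmap y a x b w) = w"
proof -
  obtain g h where gh: "g \<in> a" "h \<in> b" "w + h \<in> x" "g + w + h \<in> y" "Lmap y a x b w = g + w"
    using Lmap_decomp[OF assms] by blast
  have "- g + (g + w) + h \<in> x" using gh(3) by (simp add: add.assoc)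
  then have "Lmap x a y b (g + w) = - g + (g + w)"
    using Lmap_eqI[OF assms(2,1) is_subgrp_uminus[OF subgrp_a gh(1)] gh(2) gh(4)] by blast
  then show ?thesis using gh(5) by (simp add: add.assoc)
qed

lemma Lmap_fixes_b:
  assumes "x \<in> Gras_ab a b" "y \<in> Gras_ab a b" "h \<in> b"
  shows "Lmap y a x b h = h"
  using Lmap_eqI[OF assms(1,2) is_subgrp_zero[OF subgrp_a] is_subgrp_uminus[OF subgrp_b assms(3)]]
    is_subgrp_zero[OF Gras_abD(1)[OF assms(1)]] is_subgrp_zero[OF Gras_abD(1)[OF assms(2)]]
  by simp

lemma Lmap_self:
  assumes "y \<in> Gras_ab a b"
  shows "Lmap y a y b w = w"
proof -
  obtain h where "h \<in> b" "w + h \<in> y" using Lmap_decomp[OF assms assms] by blast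
  then show ?thesis using Lmap_eqI[OF assms assms is_subgrp_zero[OF subgrp_a]] by simp
qed

lemma Lmap_mem_a:
  assumes "y \<in> Gras_ab a b" "g \<in> a"
  shows "Lmap y a x b g \<in> a"
  unfolding Lmap_def
  using is_subgrp_add[OF subgrp_a is_subgrp_uminus[OF subgrp_a Pcheck_mem] assms(2)] Gras_abD(2)[OF assms(1)]
  by blast

lemma bij_Lmap:
  assumes "x \<in> Gras_ab a b" "y \<in> Gras_ab a b"
  shows "bij (Lmap x a y b)"
  by (rule o_bij[of "Lmap y a x b"]) (simp_all add: fun_eq_iff Lmap_inverse assms)

lemma Lmap_image_a:
  assumes "x \<in> Gras_ab a b" "y \<in> Gras_ab a b"
  shows "Lmap x a y b ` a = a"
proof
  show "Lmap x a y b ` a \<subseteq> a" using Lmap_mem_a[OF assms(1)] by blast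
  show "a \<subseteq> Lmap x a y b ` a"
  proof
    fix g assume "g \<in> a"
    then show "g \<in> Lmap x a y b ` a"
      using Lmap_mem_a[OF assms(2)] Lmap_inverse[OF assms, of g] by (metis image_eqI)
  qed
qed

lemma Lmap_image_b:
  assumes "x \<in> Gras_ab a b" "y \<in> Gras_ab a b"
  shows "Lmap x a y b ` b = b"
  using Lmap_fixes_b[OF assms(2,1)] by simp

lemma mem_Gamma_iff:
  assumes "x \<in> Gras_ab a b" "y \<in> Gras_ab a b"
  shows "w \<in> Gamma x a y b z \<longleftrightarrow> Lmap y a x b w \<in> z"
proof
  assume "w \<in> Gamma x a y b z"
  then obtain g h where "g \<in> a" "h \<in> b" "g + w + h \<in> y" "g + w \<in> z" "w + h \<in> x"
    unfolding Gamma_def by blast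
  then show "Lmap y a x b w \<in> z" using Lmap_eqI[OF assms] by simp
next
  assume "Lmap y a x b w \<in> z"
  moreover obtain g h where "g \<in> a" "h \<in> b" "w + h \<in> x" "g + w + h \<in> y" "Lmap y a x b w = g + w"
    using Lmap_decomp[OF assms] by blast
  ultimately show "w \<in> Gamma x a y b z" unfolding Gamma_def by auto
qed

lemma Gamma_eq_image:
  assumes "x \<in> Gras_ab a b" "y \<in> Gras_ab a b"
  shows "Gamma x a y b z = Lmap x a y b ` z"
  using mem_Gamma_iff[OF assms] Lmap_inverse[OF assms] Lmap_inverse[OF assms(2,1)]
  by (auto simp: image_iff) metis

lemma Gamma_mem_Gras:
  assumes "x \<in> Gras_ab a b" "y \<in> Gras_ab a b" "z \<in> Gras"
  shows "Gamma x a y b z \<in> Gras"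
  using is_subgrp_additive_image[of "Lmap x a y b", OF Lmap_add[OF assms(2,1)]] assms(3)
  unfolding Gamma_eq_image[OF assms(1,2)] Gras_def by blast

lemma Gamma_mem_Gras_ab:
  assumes "x \<in> Gras_ab a b" "y \<in> Gras_ab a b" "z \<in> Gras_ab a b"
  shows "Gamma x a y b z \<in> Gras_ab a b"
proof -
  note image =
    transv_additive_image[of "Lmap x a y b", OF Lmap_add[OF assms(2,1)] bij_Lmap[OF assms(1,2)]]
  have "transv a (Gamma x a y b z)" "transv (Gamma x a y b z) b"
    using image[OF Gras_abD(2)[OF assms(3)]] image[OF Gras_abD(3)[OF assms(3)]]
    unfolding Gamma_eq_image[OF assms(1,2)] Lmap_image_a[OF assms(1,2)] Lmap_image_b[OF assms(1,2)] .
  moreover have "Gamma x a y b z \<in> Gras"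
    using Gamma_mem_Gras[OF assms(1,2)] assms(3) by (simp add: Gras_ab_def)
  ultimately show ?thesis by (simp add: Gras_ab_def U_def)
qed

lemma Lmap_Gamma:
  assumes "y \<in> Gras_ab a b" "g \<in> Gras_ab a b" "h \<in> Gras_ab a b"
  shows "Lmap (Gamma g a y b h) a y b w = Lmap g a y b (Lmap h a y b w)"
proof -
  obtain g\<^sub>1 h\<^sub>1 where 1: "g\<^sub>1 \<in> a" "h\<^sub>1 \<in> b" "w + h\<^sub>1 \<in> y" "g\<^sub>1 + w + h\<^sub>1 \<in> h"
    "Lmap h a y b w = g\<^sub>1 + w"
    using Lmap_decomp[OF assms(1,3)] by blast
  obtain g\<^sub>2 where 2: "g\<^sub>2 \<in> a" "Lmap g a y b (g\<^sub>1 + w) = g\<^sub>2 + (g\<^sub>1 + w)"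
    using Lmap_decomp[OF assms(1,2)] by blast
  have "Lmap g a y b (g\<^sub>1 + w + h\<^sub>1) = g\<^sub>2 + g\<^sub>1 + w + h\<^sub>1"
    using Lmap_add[OF assms(1,2), of "g\<^sub>1 + w" h\<^sub>1] Lmap_fixes_b[OF assms(1,2) 1(2)] 2(2)
    by (simp add: add.assoc)
  then have "g\<^sub>2 + g\<^sub>1 + w + h\<^sub>1 \<in> Gamma g a y b h"
    unfolding Gamma_eq_image[OF assms(2,1)] using 1(4) by (metis image_eqI)
  then have "Lmap (Gamma g a y b h) a y b w = g\<^sub>2 + g\<^sub>1 + w"
    using Lmap_eqI[OF assms(1) Gamma_mem_Gras_ab[OF assms(2,1,3)] is_subgrp_add[OF subgrp_a 2(1) 1(1)]
        1(2,3)] by blast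
  then show ?thesis using 1(5) 2(2) by (simp add: add.assoc)
qed

lemma Gamma_Gamma:
  assumes "y \<in> Gras_ab a b" "g \<in> Gras_ab a b" "h \<in> Gras_ab a b"
  shows "Gamma g a y b (Gamma h a y b z) = Gamma (Gamma g a y b h) a y b z"
  using Lmap_Gamma[OF assms] Gamma_mem_Gras_ab[OF assms(2,1,3)]
  by (simp add: Gamma_eq_image assms image_image)

lemma Gamma_base:
  assumes "y \<in> Gras_ab a b"
  shows "Gamma y a y b z = z"
  by (simp add: Gamma_eq_image[OF assms assms] Lmap_self[OF assms])

lemma subtorsor_Gras_ab: "is_subtorsor (Gras_ab a b) (U a b) (\<lambda>x u z. Gamma x a u b z)"
  unfolding is_subtorsor_def using Gamma_mem_Gras_ab by (auto simp: Gras_ab_def)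

lemma left_action_Gras:
  assumes "y \<in> Gras_ab a b"
  shows "is_left_action (Gras_ab a b) (\<lambda>x z. Gamma x a y b z) y (\<lambda>x z. Gamma x a y b z) Gras"
  unfolding is_left_action_def
  using Gamma_mem_Gras[OF _ assms] Gamma_base[OF assms] Gamma_Gamma[OF assms] by simp

lemma left_action_Gras_hat:
  assumes "y \<in> Gras_ab a b"
  shows "is_left_action (Gras_ab a b) (\<lambda>x z. Gamma x a y b z) y
    (\<lambda>x (z, \<zeta>). (Gamma x a y b z, Lmap x a y b \<zeta>)) Gras_hat"
  unfolding is_left_action_def Gras_hat_def
  using Gamma_mem_Gras[OF _ assms] Gamma_eq_image[OF _ assms] Gamma_base[OF assms] Lmap_self[OF assms]
    Gamma_Gamma[OF assms] Lmap_Gamma[OF assms]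
  by auto

end

theorem theorem7p6:
  fixes a b y :: "'a::group_add set"
  assumes "is_subgrp a" and "is_central a"
    and "is_subgrp b" and "is_central b"
    and "y \<in> Gras_ab a b"
  shows "is_subtorsor (Gras_ab a b) (U a b) (\<lambda>x u z. Gamma x a u b z)
    \<and> is_left_action (Gras_ab a b) (\<lambda>x z. Gamma x a y b z) y
        (\<lambda>x z. Gamma x a y b z) Gras
    \<and> is_left_action (Gras_ab a b) (\<lambda>x z. Gamma x a y b z) y
        (\<lambda>x (z, \<zeta>). (Gamma x a y b z, Lmap x a y b \<zeta>)) Gras_hat
    \<and> is_right_action (Gras_ab a b) (\<lambda>x z. Gamma x a y b z) y
        (\<lambda>z x. Gamma z a y b x) Gras
    \<and> is_right_action (Gras_ab a b) (\<lambda>x z. Gamma x a y b z) y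
        (\<lambda>(z, \<zeta>) x. (Gamma z a y b x, Rmap a y b x \<zeta>)) Gras_hat"
proof -
  interpret ab: central_subgroups a b using assms by unfold_locales
  interpret ba: central_subgroups b a using assms by unfold_locales
  have swap: "Gras_ab b a = Gras_ab a b" by (rule Gras_ab_commute[OF assms(4,2)])
  have y: "y \<in> Gras_ab b a" using assms(5) swap by simp
  have closed: "\<And>g h. g \<in> Gras_ab a b \<Longrightarrow> h \<in> Gras_ab a b \<Longrightarrow> Gamma h b y a g \<in> Gras_ab a b"
    using ba.Gamma_mem_Gras_ab[OF _ y] unfolding swap by blast
  note Gamma_commute = Gamma_commute[OF assms(2,4)]
  have "is_right_action (Gras_ab a b) (\<lambda>x z. Gamma x a y b z) y (\<lambda>z x. Gamma z a y b x) Gras"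
    by (rule is_right_action_of_left[OF ba.left_action_Gras[OF y, unfolded swap] assms(5) closed])
      (simp_all only: Gamma_commute)
  moreover have "is_right_action (Gras_ab a b) (\<lambda>x z. Gamma x a y b z) y
      (\<lambda>(z, \<zeta>) x. (Gamma z a y b x, Rmap a y b x \<zeta>)) Gras_hat"
    by (rule is_right_action_of_left[OF ba.left_action_Gras_hat[OF y, unfolded swap] assms(5) closed])
      (auto simp only: Gamma_commute split: prod.splits intro!: Rmap_eq_Lmap assms
        ab.Gras_abD(2)[OF assms(5)] ab.Gras_abD(3))
  ultimately show ?thesis
    using ab.subtorsor_Gras_ab ab.left_action_Gras[OF assms(5)] ab.left_action_Gras_hat[OF assms(5)]
    by blast
qed

end
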